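(* For every instance of the single-processor carbon-aware scheduling problem that admits a valid schedule, there exists an optimal (minimum carbon cost) valid schedule that is an $\mathcal{E}$-schedule, i.e., in which every block starts or ends at a time belonging to $\mathcal{E}=\{b_1=0,e_1=b_2,\dots,e_{J-1}=b_J,e_J=T\}$.
   Context: Single-processor carbon-aware scheduling problem. All quantities are nonnegative integers. One processor must execute tasks $v_1,\dots,v_n$ in this fixed order; task $v_i$ has duration $\omega(v_i)\ge 1$. The horizon $[0,T)$ is partitioned into $J$ consecutive intervals $I_j=[b_j,e_j)$, $1\le j\le J$, with $b_1=0$, $e_j=b_{j+1}$, $e_J=T$, each with a constant green power budget $\mathcal{G}_j\ge 0$ per time unit. The processor consumes idle power $P_{\mathrm{idle}}$ at every time unit, plus working power $P_{\mathrm{work}}$ at every time unit during which it executes a task. A (valid) schedule is an assignment of integer start times $\sigma(v_i)$ with $\sigma(v_1)\ge 0$, $\sigma(v_{i+1})\ge \sigma(v_i)+\omega(v_i)$ for $1\le i<n$, and $\sigma(v_n)+\omega(v_n)\le T$. The processor is active at integer time $t$ iff $\sigma(v_i)\le t<\sigma(v_i)+\omega(v_i)$ for some $i$; the power at $t$ is $\mathcal{P}(t)=P_{\mathrm{idle}}+P_{\mathrm{work}}$ if active and $P_{\mathrm{idle}}$ otherwise. The total carbon cost is $\mathcal{CC}=\sum_{t=0}^{T-1}\max(\mathcal{P}(t)-\mathcal{G}_{j(t)},0)$, where $t\in I_{j(t)}$. A block of a schedule is a maximal set of consecutive tasks $v_r,\dots,v_s$ ($r\le s$) executed without idle time between them,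 i.e., $\sigma(v_{i+1})=\sigma(v_i)+\omega(v_i)$ for $r\le i<s$, with idle time (or the horizon boundary) immediately before $v_r$ and immediately after $v_s$. A block starts at $\sigma(v_r)$ and ends at $\sigma(v_s)+\omega(v_s)$. *)

theory Defs
  imports Main
begin

(* Tasks are indexed 0..n-1 (v_{i+1} is task i), durations w i.
   Intervals are indexed 0..J-1: interval j is [b j, b (Suc j)), b 0 = 0, b J = T,
   with green budget G j. *)

definition valid_intervals :: "nat \<Rightarrow> (nat \<Rightarrow> nat) \<Rightarrow> nat \<Rightarrow> bool" where
  "valid_intervals J b T \<longleftrightarrow> J \<ge> 1 \<and> b 0 = 0 \<and> b J = T \<and> (\<forall>j<J. b j < b (Suc j))"

definition valid_schedule :: "nat \<Rightarrow> (nat \<Rightarrow> nat) \<Rightarrow> nat \<Rightarrow> (nat \<Rightarrow> nat) \<Rightarrow> bool" where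
  "valid_schedule n w T \<sigma> \<longleftrightarrow>
     (\<forall>i. Suc i < n \<longrightarrow> \<sigma> (Suc i) \<ge> \<sigma> i + w i) \<and>
     (n \<ge> 1 \<longrightarrow> \<sigma> (n - 1) + w (n - 1) \<le> T)"

definition active :: "nat \<Rightarrow> (nat \<Rightarrow> nat) \<Rightarrow> (nat \<Rightarrow> nat) \<Rightarrow> nat \<Rightarrow> bool" where
  "active n w \<sigma> t \<longleftrightarrow> (\<exists>i<n. \<sigma> i \<le> t \<and> t < \<sigma> i + w i)"

definition power :: "nat \<Rightarrow> (nat \<Rightarrow> nat) \<Rightarrow> (nat \<Rightarrow> nat) \<Rightarrow> nat \<Rightarrow> nat \<Rightarrow> nat \<Rightarrow> nat" where
  "power n w \<sigma> Pidle Pwork t = (if active n w \<sigma> t then Pidle + Pwork else Pidle)"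

(* index of the interval containing t (for t < T = b J) *)
definition interval_of :: "nat \<Rightarrow> (nat \<Rightarrow> nat) \<Rightarrow> nat \<Rightarrow> nat" where
  "interval_of J b t = (THE j. j < J \<and> b j \<le> t \<and> t < b (Suc j))"

definition carbon_cost ::
  "nat \<Rightarrow> (nat \<Rightarrow> nat) \<Rightarrow> nat \<Rightarrow> (nat \<Rightarrow> nat) \<Rightarrow> (nat \<Rightarrow> nat) \<Rightarrow> nat \<Rightarrow> nat \<Rightarrow> nat \<Rightarrow> (nat \<Rightarrow> nat) \<Rightarrow> nat" where
  "carbon_cost n w J b G T Pidle Pwork \<sigma> =
     (\<Sum>t<T. (power n w \<sigma> Pidle Pwork t) - G (interval_of J b t))"
  (* natural-number subtraction truncates at 0, i.e. it is max(P(t) - G, 0) *)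

definition block_start :: "(nat \<Rightarrow> nat) \<Rightarrow> (nat \<Rightarrow> nat) \<Rightarrow> nat \<Rightarrow> bool" where
  "block_start w \<sigma> i \<longleftrightarrow> i = 0 \<or> \<sigma> i > \<sigma> (i - 1) + w (i - 1)"

definition block_end :: "nat \<Rightarrow> (nat \<Rightarrow> nat) \<Rightarrow> (nat \<Rightarrow> nat) \<Rightarrow> nat \<Rightarrow> bool" where
  "block_end n w \<sigma> i \<longleftrightarrow> Suc i = n \<or> \<sigma> (Suc i) > \<sigma> i + w i"

definition is_block :: "nat \<Rightarrow> (nat \<Rightarrow> nat) \<Rightarrow> (nat \<Rightarrow> nat) \<Rightarrow> nat \<Rightarrow> nat \<Rightarrow> bool" where
  "is_block n w \<sigma> r s \<longleftrightarrow> r \<le> s \<and> s < n \<and> block_start w \<sigma> r \<and> block_end n w \<sigma> s \<and>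
     (\<forall>i. r \<le> i \<and> i < s \<longrightarrow> \<sigma> (Suc i) = \<sigma> i + w i)"

definition E_set :: "nat \<Rightarrow> (nat \<Rightarrow> nat) \<Rightarrow> nat set" where
  "E_set J b = b ` {0..J}"

definition E_schedule :: "nat \<Rightarrow> (nat \<Rightarrow> nat) \<Rightarrow> nat \<Rightarrow> (nat \<Rightarrow> nat) \<Rightarrow> (nat \<Rightarrow> nat) \<Rightarrow> bool" where
  "E_schedule n w J b \<sigma> \<longleftrightarrow>
     (\<forall>r s. is_block n w \<sigma> r s \<longrightarrow> \<sigma> r \<in> E_set J b \<or> \<sigma> s + w s \<in> E_set J b)"

end

theory Submission
  imports Defs
begin

(* Among the optimal schedules take one whose start times have the least sum.  If a block of it
   ran from a to e with neither point in E, the idle time around it would allow moving the block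
   one unit earlier or one unit later.  As a - 1 and a lie in the same interval, and so do e - 1
   and e, the two moves change the carbon cost by opposite amounts.  By optimality both changes
   vanish, so the earlier copy is again optimal, yet has a smaller sum of start times. *)

lemma sum_atLeastLessThan_shift_Suc:
  fixes c :: "nat \<Rightarrow> 'a::comm_monoid_add"
  assumes "a \<le> e"
  shows "sum c {a..<e} + c e = c a + sum c {Suc a..<Suc e}"
  using sum.atLeastLessThan_Suc[OF assms, of c] sum.atLeast_Suc_lessThan[of a "Suc e" c] assms
  by simp

lemma valid_schedule_finish_le_start:
  assumes "valid_schedule n w T \<sigma>" "i < j" "j < n"
  shows "\<sigma> i + w i \<le> \<sigma> j"
proof -
  from \<open>i < j\<close> have "Suc i \<le> j" by simp
  then show ?thesis
    using \<open>j < n\<close>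
  proof (induction j rule: dec_induct)
    case base
    then show ?case using assms(1) by (simp add: valid_schedule_def)
  next
    case (step j)
    then have "\<sigma> i + w i \<le> \<sigma> j" and "\<sigma> j + w j \<le> \<sigma> (Suc j)"
      using assms(1) by (auto simp: valid_schedule_def)
    then show ?case by simp
  qed
qed

lemma valid_schedule_start_mono:
  assumes "valid_schedule n w T \<sigma>" "i \<le> j" "j < n"
  shows "\<sigma> i \<le> \<sigma> j"
  using valid_schedule_finish_le_start[OF assms(1), of i j] assms(2,3)
  by (cases "i = j") auto

lemma valid_schedule_finish_le_horizon:
  assumes "valid_schedule n w T \<sigma>" "i < n"
  shows "\<sigma> i + w i \<le> T"
proof -
  have "\<sigma> (n - 1) + w (n - 1) \<le> T"
    using assms by (simp add: valid_schedule_def)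
  moreover have "\<sigma> i + w i \<le> \<sigma> (n - 1) + w (n - 1)"
  proof (cases "i < n - 1")
    case True
    then show ?thesis using valid_schedule_finish_le_start[OF assms(1), of i "n - 1"] assms(2) by simp
  next
    case False
    with assms(2) have "i = n - 1" by simp
    then show ?thesis by simp
  qed
  ultimately show ?thesis by simp
qed

lemma valid_intervals_strict_mono:
  assumes "valid_intervals J b T" "i < j" "j \<le> J"
  shows "b i < b j"
proof -
  from \<open>i < j\<close> have "Suc i \<le> j" by simp
  then show ?thesis
    using \<open>j \<le> J\<close>
  proof (induction j rule: dec_induct)
    case (step j)
    then show ?case
      using assms(1) by (simp add: valid_intervals_def less_trans)
  qed (use assms(1) in \<open>simp add: valid_intervals_def\<close>)
qed

lemma interval_of_eqI:
  assumes "valid_intervals J b T" "j < J" "b j \<le> t" "t < b (Suc j)"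
  shows "interval_of J b t = j"
  unfolding interval_of_def
proof (rule the_equality)
  fix j' assume j': "j' < J \<and> b j' \<le> t \<and> t < b (Suc j')"
  have False if "Suc j \<le> j'"
    using valid_intervals_strict_mono[OF assms(1), of "Suc j" j'] that j' assms(4)
    by (cases "Suc j = j'") auto
  moreover have False if "Suc j' \<le> j"
    using valid_intervals_strict_mono[OF assms(1), of "Suc j'" j] that j' assms(2,3)
    by (cases "Suc j' = j") auto
  ultimately show "j' = j"
    by (cases j' j rule: linorder_cases) auto
qed (use assms in simp)

lemma interval_of_exists:
  assumes "valid_intervals J b T" "t < T"
  shows "\<exists>j<J. b j \<le> t \<and> t < b (Suc j)"
proof -
  have "t < b J" and "\<not> t < b 0"
    using assms by (auto simp: valid_intervals_def)
  from ex_least_nat_less[of "\<lambda>j. t < b j", OF this] show ?thesis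
    by (auto simp: not_less)
qed

lemma zero_in_E_set: "valid_intervals J b T \<Longrightarrow> 0 \<in> E_set J b"
  by (auto simp: E_set_def valid_intervals_def intro: image_eqI[of _ _ 0])

lemma horizon_in_E_set: "valid_intervals J b T \<Longrightarrow> T \<in> E_set J b"
  by (auto simp: E_set_def valid_intervals_def intro: image_eqI[of _ _ J])

lemma interval_of_pred_eq:
  assumes "valid_intervals J b T" "x \<notin> E_set J b" "0 < x" "x < T"
  shows "interval_of J b (x - 1) = interval_of J b x"
proof -
  have "x - 1 < T" using assms(4) by simp
  then obtain j where j: "j < J" "b j \<le> x - 1" "x - 1 < b (Suc j)"
    using interval_of_exists[OF assms(1)] by blast
  have "x \<noteq> b (Suc j)"
    using assms(2) j(1) by (auto simp: E_set_def)
  with j have "b j \<le> x" "x < b (Suc j)" by linarith+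
  with j show ?thesis
    using interval_of_eqI[OF assms(1)] by metis
qed

definition busy_cost ::
  "nat \<Rightarrow> (nat \<Rightarrow> nat) \<Rightarrow> (nat \<Rightarrow> nat) \<Rightarrow> nat \<Rightarrow> nat \<Rightarrow> nat \<Rightarrow> (nat \<Rightarrow> bool) \<Rightarrow> nat" where
  "busy_cost J b G T Pidle Pwork B =
     (\<Sum>t<T. (if B t then Pidle + Pwork else Pidle) - G (interval_of J b t))"

definition busy_surcharge :: "nat \<Rightarrow> (nat \<Rightarrow> nat) \<Rightarrow> (nat \<Rightarrow> nat) \<Rightarrow> nat \<Rightarrow> nat \<Rightarrow> nat \<Rightarrow> nat" where
  "busy_surcharge J b G Pidle Pwork t =
     (Pidle + Pwork - G (interval_of J b t)) - (Pidle - G (interval_of J b t))"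

lemma carbon_cost_eq_busy_cost:
  "carbon_cost n w J b G T Pidle Pwork \<sigma> = busy_cost J b G T Pidle Pwork (active n w \<sigma>)"
  by (simp add: carbon_cost_def busy_cost_def power_def)

lemma busy_cost_add_window:
  assumes "e \<le> T" "\<And>t. a \<le> t \<Longrightarrow> t < e \<Longrightarrow> \<not> B t"
  shows "busy_cost J b G T Pidle Pwork (\<lambda>t. B t \<or> a \<le> t \<and> t < e) =
    busy_cost J b G T Pidle Pwork B + (\<Sum>t\<in>{a..<e}. busy_surcharge J b G Pidle Pwork t)"
proof -
  let ?c = "busy_surcharge J b G Pidle Pwork"
  have "(\<Sum>t\<in>{a..<e}. ?c t) = (\<Sum>t\<in>{..<T} \<inter> {t. a \<le> t \<and> t < e}. ?c t)"
    using assms(1) by (intro sum.cong) auto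
  also have "\<dots> = (\<Sum>t<T. if a \<le> t \<and> t < e then ?c t else 0)"
    by (simp add: sum.inter_restrict)
  finally have window: "(\<Sum>t\<in>{a..<e}. ?c t) = (\<Sum>t<T. if a \<le> t \<and> t < e then ?c t else 0)" .
  show ?thesis
    unfolding busy_cost_def window sum.distrib[symmetric]
    by (intro sum.cong) (use assms(2) in \<open>auto simp: busy_surcharge_def\<close>)
qed

definition active_outside ::
  "nat \<Rightarrow> (nat \<Rightarrow> nat) \<Rightarrow> (nat \<Rightarrow> nat) \<Rightarrow> nat \<Rightarrow> nat \<Rightarrow> nat \<Rightarrow> bool" where
  "active_outside n w \<sigma> r s t \<longleftrightarrow> (\<exists>i<n. (i < r \<or> s < i) \<and> \<sigma> i \<le> t \<and> t < \<sigma> i + w i)"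

definition contiguous :: "(nat \<Rightarrow> nat) \<Rightarrow> (nat \<Rightarrow> nat) \<Rightarrow> nat \<Rightarrow> nat \<Rightarrow> bool" where
  "contiguous w \<sigma> r s \<longleftrightarrow> (\<forall>i. r \<le> i \<and> i < s \<longrightarrow> \<sigma> (Suc i) = \<sigma> i + w i)"

definition shift_block :: "nat \<Rightarrow> nat \<Rightarrow> (nat \<Rightarrow> nat) \<Rightarrow> (nat \<Rightarrow> nat) \<Rightarrow> nat \<Rightarrow> nat" where
  "shift_block r s f \<sigma> i = (if r \<le> i \<and> i \<le> s then f (\<sigma> i) else \<sigma> i)"

lemma is_block_contiguous: "is_block n w \<sigma> r s \<Longrightarrow> contiguous w \<sigma> r s"
  by (simp add: is_block_def contiguous_def)

lemma contiguous_start_mono: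
  assumes "contiguous w \<tau> r s" "r \<le> k" "k \<le> s"
  shows "\<tau> r \<le> \<tau> k"
  using assms(2,3)
proof (induction k rule: dec_induct)
  case (step k)
  then have "\<tau> (Suc k) = \<tau> k + w k"
    using assms(1) by (simp add: contiguous_def)
  with step show ?case by simp
qed simp

lemma contiguous_busy_iff:
  assumes "r \<le> s" "contiguous w \<tau> r s"
  shows "(\<exists>i. r \<le> i \<and> i \<le> s \<and> \<tau> i \<le> t \<and> t < \<tau> i + w i) \<longleftrightarrow> \<tau> r \<le> t \<and> t < \<tau> s + w s"
  using assms
proof (induction s rule: dec_induct)
  case (step s)
  have "contiguous w \<tau> r s" and "\<tau> (Suc s) = \<tau> s + w s"
    using step.hyps step.prems by (auto simp: contiguous_def)
  moreover have "\<tau> r \<le> \<tau> s"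
    using contiguous_start_mono[OF calculation(1) step.hyps(1)] by simp
  moreover have "(\<exists>i. r \<le> i \<and> i \<le> Suc s \<and> \<tau> i \<le> t \<and> t < \<tau> i + w i) \<longleftrightarrow>
      (\<exists>i. r \<le> i \<and> i \<le> s \<and> \<tau> i \<le> t \<and> t < \<tau> i + w i) \<or> (\<tau> (Suc s) \<le> t \<and> t < \<tau> (Suc s) + w (Suc s))"
    using step.hyps(1) le_Suc_eq le_SucI by blast
  ultimately show ?case using step.IH by auto
qed auto

lemma active_iff_outside_or_block:
  assumes "r \<le> s" "s < n" "contiguous w \<tau> r s"
  shows "active n w \<tau> t \<longleftrightarrow> active_outside n w \<tau> r s t \<or> (\<tau> r \<le> t \<and> t < \<tau> s + w s)"
proof -
  have "active n w \<tau> t \<longleftrightarrow>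
      active_outside n w \<tau> r s t \<or> (\<exists>i. r \<le> i \<and> i \<le> s \<and> \<tau> i \<le> t \<and> t < \<tau> i + w i)"
    unfolding active_def active_outside_def using assms(1,2)
    by (meson le_less_trans not_le)
  then show ?thesis
    using contiguous_busy_iff[OF assms(1,3)] by simp
qed

lemma active_outside_before_or_after:
  assumes "valid_schedule n w T \<tau>" "r \<le> s" "s < n" "active_outside n w \<tau> r s t"
  shows "t < \<tau> r \<or> \<tau> s + w s \<le> t"
proof -
  obtain i where i: "i < n" "i < r \<or> s < i" "\<tau> i \<le> t" "t < \<tau> i + w i"
    using assms(4) unfolding active_outside_def by blast
  show ?thesis
  proof (cases "i < r")
    case True
    then show ?thesis
      using valid_schedule_finish_le_start[OF assms(1), of i r] assms(2,3) i by simp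
  next
    case False
    then show ?thesis
      using valid_schedule_finish_le_start[OF assms(1), of s i] i by simp
  qed
qed

lemma carbon_cost_split_at_block:
  assumes "valid_schedule n w T \<tau>" "r \<le> s" "s < n" "contiguous w \<tau> r s"
  shows "carbon_cost n w J b G T Pidle Pwork \<tau> =
    busy_cost J b G T Pidle Pwork (active_outside n w \<tau> r s) +
    (\<Sum>t\<in>{\<tau> r..<\<tau> s + w s}. busy_surcharge J b G Pidle Pwork t)"
proof -
  have "active n w \<tau> = (\<lambda>t. active_outside n w \<tau> r s t \<or> \<tau> r \<le> t \<and> t < \<tau> s + w s)"
    using active_iff_outside_or_block[OF assms(2-4)] by blast
  moreover have "\<tau> s + w s \<le> T"
    using valid_schedule_finish_le_horizon[OF assms(1,3)] .
  moreover have "\<not> active_outside n w \<tau> r s t" if "\<tau> r \<le> t" "t < \<tau> s + w s" for t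
    using active_outside_before_or_after[OF assms(1-3), of t] that by auto
  ultimately show ?thesis
    unfolding carbon_cost_eq_busy_cost by (simp add: busy_cost_add_window)
qed

lemma active_outside_shift_block [simp]:
  "active_outside n w (shift_block r s f \<sigma>) r s = active_outside n w \<sigma> r s"
  unfolding active_outside_def
  by (intro ext arg_cong[where f = Ex]) (auto simp: shift_block_def)

lemma contiguous_shift_block:
  assumes "contiguous w \<sigma> r s" "\<And>x k. \<sigma> r \<le> x \<Longrightarrow> f (x + k) = f x + k"
  shows "contiguous w (shift_block r s f \<sigma>) r s"
  unfolding contiguous_def
proof (intro allI impI)
  fix i assume i: "r \<le> i \<and> i < s"
  then have "\<sigma> (Suc i) = \<sigma> i + w i" and "\<sigma> r \<le> \<sigma> i"
    using assms(1) contiguous_start_mono[OF assms(1)] by (auto simp: contiguous_def)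
  with i show "shift_block r s f \<sigma> (Suc i) = shift_block r s f \<sigma> i + w i"
    using assms(2) by (simp add: shift_block_def)
qed

lemma valid_schedule_shift_block:
  assumes "valid_schedule n w T \<sigma>" "r \<le> s" "s < n" "contiguous w (shift_block r s f \<sigma>) r s"
    and "0 < r \<Longrightarrow> \<sigma> (r - 1) + w (r - 1) \<le> f (\<sigma> r)"
    and "Suc s < n \<Longrightarrow> f (\<sigma> s) + w s \<le> \<sigma> (Suc s)"
    and "f (\<sigma> s) + w s \<le> T"
  shows "valid_schedule n w T (shift_block r s f \<sigma>)"
  unfolding valid_schedule_def
proof (intro conjI allI impI)
  let ?\<tau> = "shift_block r s f \<sigma>"
  fix i assume "Suc i < n"
  then have step: "\<sigma> i + w i \<le> \<sigma> (Suc i)"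
    using assms(1) by (simp add: valid_schedule_def)
  consider "r \<le> i" "i < s" | "i = s" | "Suc i = r" | "i < r \<and> Suc i < r \<or> s < i"
    using assms(2) by linarith
  then show "?\<tau> i + w i \<le> ?\<tau> (Suc i)"
  proof cases
    case 1
    then show ?thesis using assms(4) by (simp add: contiguous_def)
  next
    case 2
    then show ?thesis using assms(2,6) \<open>Suc i < n\<close> by (simp add: shift_block_def)
  next
    case 3
    then show ?thesis using assms(2,5) by (auto simp: shift_block_def)
  next
    case 4
    then show ?thesis using step by (auto simp: shift_block_def)
  qed
next
  assume "1 \<le> n"
  show "shift_block r s f \<sigma> (n - 1) + w (n - 1) \<le> T"
  proof (cases "n - 1 \<le> s")
    case True
    then have "n - 1 = s" using assms(3) by simp
    then show ?thesis using assms(2,7) by (simp add: shift_block_def)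
  next
    case False
    then show ?thesis
      using valid_schedule_finish_le_horizon[OF assms(1), of "n - 1"] \<open>1 \<le> n\<close>
      by (simp add: shift_block_def)
  qed
qed

lemma valid_schedule_advance_block:
  assumes "valid_schedule n w T \<sigma>" "is_block n w \<sigma> r s" "0 < \<sigma> r"
  shows "valid_schedule n w T (shift_block r s (\<lambda>x. x - 1) \<sigma>)"
proof -
  have rs: "r \<le> s" "s < n" and start: "block_start w \<sigma> r"
    using assms(2) by (auto simp: is_block_def)
  show ?thesis
  proof (rule valid_schedule_shift_block[OF assms(1) rs])
    show "contiguous w (shift_block r s (\<lambda>x. x - 1) \<sigma>) r s"
      using contiguous_shift_block[OF is_block_contiguous[OF assms(2)]] assms(3) by simp
    show "\<sigma> (r - 1) + w (r - 1) \<le> \<sigma> r - 1" if "0 < r"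
      using start that by (simp add: block_start_def)
    show "\<sigma> s - 1 + w s \<le> \<sigma> (Suc s)" if "Suc s < n"
      using valid_schedule_finish_le_start[OF assms(1), of s "Suc s"] that by simp
    show "\<sigma> s - 1 + w s \<le> T"
      using valid_schedule_finish_le_horizon[OF assms(1) rs(2)] by simp
  qed
qed

lemma valid_schedule_delay_block:
  assumes "valid_schedule n w T \<sigma>" "is_block n w \<sigma> r s" "\<sigma> s + w s < T"
  shows "valid_schedule n w T (shift_block r s Suc \<sigma>)"
proof -
  have rs: "r \<le> s" "s < n" and finish: "block_end n w \<sigma> s"
    using assms(2) by (auto simp: is_block_def)
  show ?thesis
  proof (rule valid_schedule_shift_block[OF assms(1) rs])
    show "contiguous w (shift_block r s Suc \<sigma>) r s"
      using is_block_contiguous[OF assms(2)] by (rule contiguous_shift_block) simp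
    show "\<sigma> (r - 1) + w (r - 1) \<le> Suc (\<sigma> r)" if "0 < r"
      using valid_schedule_finish_le_start[OF assms(1), of "r - 1" r] that rs by simp
    show "Suc (\<sigma> s) + w s \<le> \<sigma> (Suc s)" if "Suc s < n"
      using finish that by (simp add: block_end_def)
    show "Suc (\<sigma> s) + w s \<le> T"
      using assms(3) by simp
  qed
qed

lemma block_off_grid_bounds:
  assumes "valid_intervals J b T" "valid_schedule n w T \<sigma>" "s < n"
    and "\<sigma> r \<notin> E_set J b" "\<sigma> s + w s \<notin> E_set J b"
  shows "0 < \<sigma> r" "\<sigma> s + w s < T"
proof -
  show "0 < \<sigma> r"
    using zero_in_E_set[OF assms(1)] assms(4) by (metis gr0I)
  have "\<sigma> s + w s \<noteq> T"
    using horizon_in_E_set[OF assms(1)] assms(5) by metis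
  then show "\<sigma> s + w s < T"
    using valid_schedule_finish_le_horizon[OF assms(2,3)] by simp
qed

lemma carbon_cost_shift_block_balance:
  assumes "valid_intervals J b T" "valid_schedule n w T \<sigma>" "is_block n w \<sigma> r s"
    and "\<sigma> r \<notin> E_set J b" "\<sigma> s + w s \<notin> E_set J b"
  shows "carbon_cost n w J b G T Pidle Pwork (shift_block r s (\<lambda>x. x - 1) \<sigma>) +
      carbon_cost n w J b G T Pidle Pwork (shift_block r s Suc \<sigma>) =
    2 * carbon_cost n w J b G T Pidle Pwork \<sigma>"
proof -
  let ?C = "carbon_cost n w J b G T Pidle Pwork"
  let ?X = "busy_cost J b G T Pidle Pwork (active_outside n w \<sigma> r s)"
  let ?c = "busy_surcharge J b G Pidle Pwork"
  let ?L = "shift_block r s (\<lambda>x. x - 1) \<sigma>"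
  let ?R = "shift_block r s Suc \<sigma>"
  have rs: "r \<le> s" "s < n" and contig: "contiguous w \<sigma> r s"
    using assms(3) by (auto simp: is_block_def is_block_contiguous)
  have pos: "0 < \<sigma> r" and before_T: "\<sigma> s + w s < T"
    using block_off_grid_bounds[OF assms(1,2) rs(2) assms(4,5)] by auto
  have "\<sigma> r \<le> \<sigma> s"
    using valid_schedule_start_mono[OF assms(2) rs] .
  then obtain a e where a: "\<sigma> r = Suc a" and e: "\<sigma> s + w s = Suc e" and "a \<le> e"
    using pos by (intro that[of "\<sigma> r - 1" "\<sigma> s + w s - 1"]) auto
  have L: "?L r = a" "?L s + w s = e" and R: "?R r = Suc (Suc a)" "?R s + w s = Suc (Suc e)"
    using rs a e \<open>\<sigma> r \<le> \<sigma> s\<close> by (auto simp: shift_block_def)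
  have "?C \<sigma> = ?X + sum ?c {Suc a..<Suc e}"
    using carbon_cost_split_at_block[OF assms(2) rs contig] a e by simp
  moreover have "?C ?L = ?X + sum ?c {a..<e}"
    using carbon_cost_split_at_block[OF valid_schedule_advance_block[OF assms(2,3) pos] rs]
      contiguous_shift_block[OF contig] pos
    unfolding L active_outside_shift_block by simp
  moreover have "?C ?R = ?X + sum ?c {Suc (Suc a)..<Suc (Suc e)}"
    using carbon_cost_split_at_block[OF valid_schedule_delay_block[OF assms(2,3) before_T] rs]
      contiguous_shift_block[OF contig]
    unfolding R active_outside_shift_block by simp
  moreover have "?c a = ?c (Suc a)" "?c e = ?c (Suc e)"
    using interval_of_pred_eq[OF assms(1) assms(4)] interval_of_pred_eq[OF assms(1) assms(5)]
      a e \<open>a \<le> e\<close> before_T by (simp_all add: busy_surcharge_def)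
  moreover have "sum ?c {a..<e} + ?c e = ?c a + sum ?c {Suc a..<Suc e}"
    "sum ?c {Suc a..<Suc e} + ?c (Suc e) = ?c (Suc a) + sum ?c {Suc (Suc a)..<Suc (Suc e)}"
    by (intro sum_atLeastLessThan_shift_Suc; use \<open>a \<le> e\<close> in simp)+
  ultimately show ?thesis by linarith
qed

definition optimal_schedule ::
  "nat \<Rightarrow> (nat \<Rightarrow> nat) \<Rightarrow> nat \<Rightarrow> (nat \<Rightarrow> nat) \<Rightarrow> (nat \<Rightarrow> nat) \<Rightarrow> nat \<Rightarrow> nat \<Rightarrow> nat \<Rightarrow> (nat \<Rightarrow> nat) \<Rightarrow> bool"
where
  "optimal_schedule n w J b G T Pidle Pwork \<sigma> \<longleftrightarrow> valid_schedule n w T \<sigma> \<and>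
     (\<forall>\<sigma>'. valid_schedule n w T \<sigma>' \<longrightarrow>
        carbon_cost n w J b G T Pidle Pwork \<sigma> \<le> carbon_cost n w J b G T Pidle Pwork \<sigma>')"

lemma optimal_schedule_exists:
  assumes "valid_schedule n w T \<sigma>"
  shows "\<exists>\<sigma>. optimal_schedule n w J b G T Pidle Pwork \<sigma>"
  using ex_has_least_nat[of "valid_schedule n w T" \<sigma> "carbon_cost n w J b G T Pidle Pwork"] assms
  by (auto simp: optimal_schedule_def)

lemma optimal_schedule_advance_block:
  assumes "valid_intervals J b T" "optimal_schedule n w J b G T Pidle Pwork \<sigma>"
    and "is_block n w \<sigma> r s" "\<sigma> r \<notin> E_set J b" "\<sigma> s + w s \<notin> E_set J b"
  shows "optimal_schedule n w J b G T Pidle Pwork (shift_block r s (\<lambda>x. x - 1) \<sigma>)"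
proof -
  let ?C = "carbon_cost n w J b G T Pidle Pwork"
  have valid: "valid_schedule n w T \<sigma>" and least: "\<And>\<sigma>'. valid_schedule n w T \<sigma>' \<Longrightarrow> ?C \<sigma> \<le> ?C \<sigma>'"
    using assms(2) by (auto simp: optimal_schedule_def)
  have "s < n"
    using assms(3) by (simp add: is_block_def)
  note bounds = block_off_grid_bounds[OF assms(1) valid this assms(4,5)]
  have "?C \<sigma> \<le> ?C (shift_block r s Suc \<sigma>)"
    using least valid_schedule_delay_block[OF valid assms(3) bounds(2)] .
  then have "?C (shift_block r s (\<lambda>x. x - 1) \<sigma>) \<le> ?C \<sigma>"
    using carbon_cost_shift_block_balance[OF assms(1) valid assms(3-5), of G Pidle Pwork] by linarith
  then show ?thesis
    using least valid_schedule_advance_block[OF valid assms(3) bounds(1)]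
    by (auto simp: optimal_schedule_def intro: order_trans)
qed

lemma sum_advance_block_less:
  assumes "r \<le> s" "r < n" "0 < \<sigma> r"
  shows "(\<Sum>i<n. shift_block r s (\<lambda>x. x - 1) \<sigma> i) < (\<Sum>i<n. \<sigma> i)"
proof (rule sum_strict_mono_ex1)
  show "\<forall>i\<in>{..<n}. shift_block r s (\<lambda>x. x - 1) \<sigma> i \<le> \<sigma> i"
    by (simp add: shift_block_def)
  show "\<exists>i\<in>{..<n}. shift_block r s (\<lambda>x. x - 1) \<sigma> i < \<sigma> i"
    using assms by (intro bexI[of _ r]) (auto simp: shift_block_def)
qed simp

theorem lemma1:
  fixes n J T Pidle Pwork :: nat and w b G :: "nat \<Rightarrow> nat"
  assumes "\<forall>i<n. w i \<ge> 1"
    and "valid_intervals J b T"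
    and "\<exists>\<sigma>. valid_schedule n w T \<sigma>"
  shows "\<exists>\<sigma>. valid_schedule n w T \<sigma> \<and> E_schedule n w J b \<sigma> \<and>
           (\<forall>\<sigma>'. valid_schedule n w T \<sigma>' \<longrightarrow>
              carbon_cost n w J b G T Pidle Pwork \<sigma> \<le> carbon_cost n w J b G T Pidle Pwork \<sigma>')"
proof -
  let ?opt = "optimal_schedule n w J b G T Pidle Pwork"
  obtain \<sigma>\<^sub>0 where "?opt \<sigma>\<^sub>0"
    using assms(3) optimal_schedule_exists by blast
  then obtain \<sigma> where opt: "?opt \<sigma>" and least: "\<And>\<sigma>'. ?opt \<sigma>' \<Longrightarrow> (\<Sum>i<n. \<sigma> i) \<le> (\<Sum>i<n. \<sigma>' i)"
    using ex_has_least_nat[of ?opt \<sigma>\<^sub>0 "\<lambda>\<sigma>. \<Sum>i<n. \<sigma> i"] by blast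
  have "E_schedule n w J b \<sigma>"
    unfolding E_schedule_def
  proof (intro allI impI)
    fix r s assume block: "is_block n w \<sigma> r s"
    show "\<sigma> r \<in> E_set J b \<or> \<sigma> s + w s \<in> E_set J b"
    proof (rule ccontr)
      assume "\<not> ?thesis"
      then have off_grid: "\<sigma> r \<notin> E_set J b" "\<sigma> s + w s \<notin> E_set J b" by auto
      have rs: "r \<le> s" "s < n" and valid: "valid_schedule n w T \<sigma>"
        using block opt by (auto simp: is_block_def optimal_schedule_def)
      have "0 < \<sigma> r"
        using block_off_grid_bounds[OF assms(2) valid rs(2) off_grid] by simp
      then show False
        using least[OF optimal_schedule_advance_block[OF assms(2) opt block off_grid]]
          sum_advance_block_less[of r s n \<sigma>] rs by simp
    qed
  qed
  with opt show ?thesis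
    by (auto simp: optimal_schedule_def)
qed

end
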